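(* Let $(\Omega,d)$ be a compact metric space, $F$ a $k$-iterated contraction system on $\Omega$ with contraction ratio $\theta\in(0,1)$ and attractor $\Omega$, and $A:\Omega\to\mathbb{R}$ Lipschitz. Let $\mathscr{L}$ be the transfer operator, $\rho$ its spectral radius on $C(\Omega)$, $h$ a strictly positive Lipschitz function with $\mathscr{L}h=\rho h$, $\mathbb{P}\varphi=\mathscr{L}(h\varphi)/(\rho h)$ the normalized operator and $\mathbb{P}^*$ its dual. Let $C>0$, $\lambda\in(0,1)$ be constants, depending only on $\theta,\operatorname{Lip}(A),\operatorname{diam}\Omega$, such that $W_1((\mathbb{P}^* )^n\mu,(\mathbb{P}^* )^n\nu)\le C\lambda^nW_1(\mu,\nu)$ for all $n\in\mathbb{N}$ and all Borel probability measures $\mu,\nu$ on $\Omega$, and let $\mu$ be the (unique) Borel probability measure with $\mathbb{P}^*\mu=\mu$. Then for every Lipschitz $\zeta:\Omega\to\mathbb{R}$ with $\int\zeta\,d\mu=0$ and every $n\in\mathbb{N}$, \[\|\mathbb{P}^n\zeta\|_\infty+\operatorname{Lip}(\mathbb{P}^n\zeta)\le(1+\operatorname{diam}\Omega)\,C\,\operatorname{Lip}(\zeta)\,\lambda^n.\] Moreover, every strictly positive Lipschitz function $g$ with $\mathscr{L}g=\rho g$ is a constant multiple of $h$.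
   Context: A $k$-multiset is an unordered list of $k$ elements with repetitions allowed; sums over it count multiplicities. A $k$-iterated contraction system (ICS) on $\Omega$ with contraction ratio $\theta$ assigns to each $x\in\Omega$ a $k$-multiset $F(x)$ of elements of $\Omega$ such that for all $x,y$ there are enumerations $F(x)=\{x_1,\dots,x_k\}$, $F(y)=\{y_1,\dots,y_k\}$ with $d(x_i,y_i)\le\theta d(x,y)$; attractor $\Omega$ means $\Omega$ is the union of the underlying sets of the $F(x)$. Transfer operator: $\mathscr{L}f(x)=\sum_{y\in F(x)}e^{A(y)}f(y)$. The dual $\mathbb{P}^*$ acts on measures by $\int\varphi\,d(\mathbb{P}^*\mu)=\int\mathbb{P}\varphi\,d\mu$. $W_1$ is the 1-Wasserstein distance: $W_1(\mu,\nu)=\inf_\pi\int d(x,y)\,d\pi$ over couplings $\pi$ of $\mu,\nu$. $\operatorname{Lip}$ denotes the Lipschitz constant. *)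

theory Defs
  imports "HOL-Probability.Probability" "HOL-Library.Multiset"
begin

definition ICS :: "'a::metric_space set \<Rightarrow> nat \<Rightarrow> real \<Rightarrow> ('a \<Rightarrow> 'a multiset) \<Rightarrow> bool" where
  "ICS \<Omega> k \<theta> F \<longleftrightarrow>
     (\<forall>x\<in>\<Omega>. size (F x) = k \<and> set_mset (F x) \<subseteq> \<Omega>) \<and>
     (\<forall>x\<in>\<Omega>. \<forall>y\<in>\<Omega>. \<exists>xs ys. mset xs = F x \<and> mset ys = F y \<and>
          (\<forall>i<k. dist (xs ! i) (ys ! i) \<le> \<theta> * dist x y))"

definition has_attractor :: "'a set \<Rightarrow> ('a \<Rightarrow> 'a multiset) \<Rightarrow> bool" where
  "has_attractor \<Omega> F \<longleftrightarrow> \<Omega> = (\<Union>x\<in>\<Omega>. set_mset (F x))"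

definition transfer :: "('a \<Rightarrow> 'a multiset) \<Rightarrow> ('a \<Rightarrow> real) \<Rightarrow> ('a \<Rightarrow> real) \<Rightarrow> ('a \<Rightarrow> real)" where
  "transfer F A f x = (\<Sum>y\<in>#F x. exp (A y) * f y)"

definition supnorm :: "'a set \<Rightarrow> ('a \<Rightarrow> real) \<Rightarrow> real" where
  "supnorm \<Omega> f = Sup ((\<lambda>x. \<bar>f x\<bar>) ` \<Omega>)"

definition Lip :: "'a::metric_space set \<Rightarrow> ('a \<Rightarrow> real) \<Rightarrow> real" where
  "Lip \<Omega> f = Inf {L. L-lipschitz_on \<Omega> f}"

definition opnormC :: "'a::topological_space set \<Rightarrow> (('a \<Rightarrow> real) \<Rightarrow> ('a \<Rightarrow> real)) \<Rightarrow> real" where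
  "opnormC \<Omega> T = Sup {supnorm \<Omega> (T f) | f. continuous_on \<Omega> f \<and> supnorm \<Omega> f \<le> 1}"

definition spectral_radiusC :: "'a::topological_space set \<Rightarrow> (('a \<Rightarrow> real) \<Rightarrow> ('a \<Rightarrow> real)) \<Rightarrow> real" where
  "spectral_radiusC \<Omega> T = lim (\<lambda>n. opnormC \<Omega> (T ^^ n) powr (1 / real n))"

definition Pnorm :: "('a \<Rightarrow> 'a multiset) \<Rightarrow> ('a \<Rightarrow> real) \<Rightarrow> real \<Rightarrow> ('a \<Rightarrow> real) \<Rightarrow> ('a \<Rightarrow> real) \<Rightarrow> ('a \<Rightarrow> real)" where
  "Pnorm F A \<rho> h \<phi> x = transfer F A (\<lambda>y. h y * \<phi> y) x / (\<rho> * h x)"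

definition borelOn :: "'a::topological_space set \<Rightarrow> 'a measure" where
  "borelOn \<Omega> = restrict_space borel \<Omega>"

definition prob_on :: "'a::topological_space set \<Rightarrow> 'a measure \<Rightarrow> bool" where
  "prob_on \<Omega> M \<longleftrightarrow> prob_space M \<and> sets M = sets (borelOn \<Omega>)"

text \<open>Dual operator on measures:  (P* mu)(B) = integral of P(indicator B) d mu,
  i.e. integral phi d(P* mu) = integral (P phi) d mu.\<close>
definition Pdual :: "'a::topological_space set \<Rightarrow> (('a \<Rightarrow> real) \<Rightarrow> ('a \<Rightarrow> real)) \<Rightarrow> 'a measure \<Rightarrow> 'a measure" where
  "Pdual \<Omega> P M = measure_of \<Omega> (sets (borelOn \<Omega>))
      (\<lambda>B. \<integral>\<^sup>+ x. ennreal (P (indicator B) x) \<partial>M)"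

definition couplings :: "'a::metric_space set \<Rightarrow> 'a measure \<Rightarrow> 'a measure \<Rightarrow> ('a \<times> 'a) measure set" where
  "couplings \<Omega> M N = {\<pi>. prob_space \<pi> \<and> sets \<pi> = sets (borelOn \<Omega> \<Otimes>\<^sub>M borelOn \<Omega>) \<and>
      distr \<pi> (borelOn \<Omega>) fst = M \<and> distr \<pi> (borelOn \<Omega>) snd = N}"

definition W1 :: "'a::metric_space set \<Rightarrow> 'a measure \<Rightarrow> 'a measure \<Rightarrow> real" where
  "W1 \<Omega> M N = Inf ((\<lambda>\<pi>. \<integral>p. dist (fst p) (snd p) \<partial>\<pi>) ` couplings \<Omega> M N)"

end

theory Submission
  imports Defs
begin

text \<open>Normalizing by the eigenfunction \<open>h\<close> makes \<open>\<P>\<close> a Markov operator, and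
  \<open>\<P>\<^sup>n \<zeta> x = \<integral>\<zeta> d((\<P>\<^sup>*)\<^sup>n \<delta>\<^sub>x)\<close>, because \<open>(\<P>\<^sup>*)\<^sup>n \<delta>\<^sub>x\<close> is a finitely supported probability
  measure. For Lipschitz \<open>\<zeta>\<close> the easy half of Kantorovich duality,
  \<open>\<bar>\<integral>\<zeta> dM - \<integral>\<zeta> dN\<bar> \<le> Lip \<zeta> \<cdot> W\<^sub>1(M, N)\<close>, combined with the \<open>W\<^sub>1\<close>-contraction of \<open>\<P>\<^sup>*\<close>
  gives \<open>Lip (\<P>\<^sup>n \<zeta>) \<le> C \<lambda>\<^sup>n Lip \<zeta>\<close> (compare \<open>\<delta>\<^sub>x\<close> with \<open>\<delta>\<^sub>y\<close>) and, if \<open>\<integral>\<zeta> d\<mu> = 0\<close>,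
  \<open>\<bar>\<P>\<^sup>n \<zeta> x\<bar> \<le> C \<lambda>\<^sup>n Lip \<zeta> diam \<Omega>\<close> (compare \<open>\<delta>\<^sub>x\<close> with the invariant \<open>\<mu>\<close>).
  For a second Lipschitz eigenfunction \<open>g\<close>, the quotient \<open>g / h\<close> is a Lipschitz fixed point
  of \<open>\<P>\<close>; minus its \<open>\<mu>\<close>-mean it is a centred fixed point whose iterates tend to \<open>0\<close>, so
  \<open>g / h\<close> is constant.\<close>

lemma space_borelOn [simp]: "space (borelOn \<Omega>) = \<Omega>"
  by (simp add: borelOn_def space_restrict_space)

lemma sets_borelOn_iff:
  fixes \<Omega> :: "'a::metric_space set"
  assumes "compact \<Omega>"
  shows "B \<in> sets (borelOn \<Omega>) \<longleftrightarrow> B \<subseteq> \<Omega> \<and> B \<in> sets borel"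
proof -
  have "\<Omega> \<inter> space borel \<in> sets borel"
    using borel_closed[OF compact_imp_closed[OF assms]] by simp
  then show ?thesis unfolding borelOn_def by (rule sets_restrict_space_iff)
qed

lemma finite_subset_in_sets_borelOn:
  fixes \<Omega> :: "'a::metric_space set"
  assumes "compact \<Omega>" "finite S" "S \<subseteq> \<Omega>"
  shows "S \<in> sets (borelOn \<Omega>)"
  using assms by (simp add: sets_borelOn_iff borel_closed finite_imp_closed)

lemma borel_measurable_borelOn_continuous_on:
  "continuous_on \<Omega> f \<Longrightarrow> f \<in> borel_measurable (borelOn \<Omega>)"
  unfolding borelOn_def by (rule borel_measurable_continuous_on_restrict)

text \<open>The product of the restricted Borel algebras need not be the Borel algebra of the
  product, so measurability of the distance is not automatic. On a compact set it is the
  countable infimum of the measurable maps \<open>(a, b) \<mapsto> dist a d + dist d b\<close> over a dense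
  countable set of points \<open>d\<close>.\<close>
lemma borel_measurable_dist_borelOn:
  fixes \<Omega> :: "'a::metric_space set"
  assumes cpt: "compact \<Omega>"
  shows "(\<lambda>p. dist (fst p) (snd p)) \<in> borel_measurable (borelOn \<Omega> \<Otimes>\<^sub>M borelOn \<Omega>)"
proof -
  have "\<forall>n. \<exists>K. finite K \<and> \<Omega> \<subseteq> (\<Union>x\<in>K. ball x (inverse (real (Suc n))))"
    using cpt unfolding compact_eq_totally_bounded by auto
  then obtain K where K: "\<And>n. finite (K n)"
    "\<And>n. \<Omega> \<subseteq> (\<Union>x\<in>K n. ball x (inverse (real (Suc n))))"
    by metis
  define D where "D = (\<Union>n. K n)"
  have "countable D" unfolding D_def using K(1) by (simp add: countable_finite)
  moreover have "(\<lambda>p. dist (fst p) d + dist d (snd p))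
      \<in> borel_measurable (borelOn \<Omega> \<Otimes>\<^sub>M borelOn \<Omega>)" for d
    by (intro borel_measurable_add measurable_compose[OF measurable_fst]
        measurable_compose[OF measurable_snd] borel_measurable_borelOn_continuous_on
        continuous_intros)
  ultimately have inf_meas: "(\<lambda>p. INF d\<in>D. dist (fst p) d + dist d (snd p))
      \<in> borel_measurable (borelOn \<Omega> \<Otimes>\<^sub>M borelOn \<Omega>)"
    by (rule borel_measurable_cINF_real)
  have "dist a b = (INF d\<in>D. dist a d + dist d b)" if ab: "a \<in> \<Omega>" "b \<in> \<Omega>" for a b
  proof (rule antisym)
    have "D \<noteq> {}" using K(2)[of 0] ab(1) unfolding D_def by blast
    then show "dist a b \<le> (INF d\<in>D. dist a d + dist d b)"
      by (intro cINF_greatest) (auto intro: dist_triangle)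
    show "(INF d\<in>D. dist a d + dist d b) \<le> dist a b"
    proof (rule field_le_epsilon)
      fix e :: real assume "0 < e"
      then obtain n :: nat where n: "inverse (real (Suc n)) < e / 2"
        using reals_Archimedean[of "e / 2"] by auto
      obtain d where d: "d \<in> K n" "dist d a < inverse (real (Suc n))"
        using K(2)[of n] ab(1) by auto
      have "(INF d\<in>D. dist a d + dist d b) \<le> dist a d + dist d b"
        using d(1) by (intro cINF_lower bdd_belowI[of _ 0]) (auto simp: D_def)
      also have "\<dots> \<le> dist a b + e"
        using dist_triangle[of d b a] d(2) n by (simp add: dist_commute)
      finally show "(INF d\<in>D. dist a d + dist d b) \<le> dist a b + e" .
    qed
  qed
  then show ?thesis
    using inf_meas by (subst measurable_cong[where g = "\<lambda>p. INF d\<in>D. dist (fst p) d + dist d (snd p)"])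
      (auto simp: space_pair_measure)
qed

lemma integrable_prob_on_continuous_on:
  fixes \<Omega> :: "'a::metric_space set" and f :: "'a \<Rightarrow> real"
  assumes cpt: "compact \<Omega>" and \<mu>: "prob_on \<Omega> \<mu>" and f: "continuous_on \<Omega> f"
  shows "integrable \<mu> f"
proof -
  have s: "sets \<mu> = sets (borelOn \<Omega>)" and p: "prob_space \<mu>"
    using \<mu> unfolding prob_on_def by auto
  have "f \<in> borel_measurable \<mu>"
    using borel_measurable_borelOn_continuous_on[OF f] measurable_cong_sets[OF s refl] by blast
  moreover obtain B where "\<And>x. x \<in> \<Omega> \<Longrightarrow> norm (f x) \<le> B"
    using compact_imp_bounded[OF compact_continuous_image[OF f cpt]] unfolding bounded_iff by auto
  ultimately show ?thesis
    using sets_eq_imp_space_eq[OF s] p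
    by (intro finite_measure.integrable_const_bound[where B = B] AE_I2)
      (auto simp: prob_space_def)
qed

definition finite_point_measure :: "'a::topological_space set \<Rightarrow> 'a set \<Rightarrow> ('a \<Rightarrow> real) \<Rightarrow> 'a measure" where
  "finite_point_measure \<Omega> S w = distr (point_measure S (\<lambda>y. ennreal (w y))) (borelOn \<Omega>) (\<lambda>y. y)"

lemma sets_finite_point_measure [simp]: "sets (finite_point_measure \<Omega> S w) = sets (borelOn \<Omega>)"
  unfolding finite_point_measure_def by simp

lemma space_finite_point_measure [simp]: "space (finite_point_measure \<Omega> S w) = \<Omega>"
  unfolding finite_point_measure_def by simp

context
  fixes \<Omega> :: "'a::metric_space set" and S :: "'a set" and w :: "'a \<Rightarrow> real"
  assumes cpt: "compact \<Omega>" and S: "finite S" "S \<subseteq> \<Omega>"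
begin

lemma emeasure_finite_point_measure:
  "B \<in> sets (borelOn \<Omega>) \<Longrightarrow> emeasure (finite_point_measure \<Omega> S w) B = (\<Sum>y\<in>S \<inter> B. ennreal (w y))"
  unfolding finite_point_measure_def using S
  by (subst emeasure_distr) (auto simp: space_point_measure emeasure_point_measure_finite Int_commute)

lemma nn_integral_finite_point_measure:
  "(\<integral>\<^sup>+x. f x \<partial>finite_point_measure \<Omega> S w) = (\<Sum>y\<in>S. f y * ennreal (w y))"
proof -
  let ?\<nu> = "finite_point_measure \<Omega> S w"
  have singleton: "{y} \<in> sets ?\<nu>" if "y \<in> S" for y
    using that S by (simp add: finite_subset_in_sets_borelOn[OF cpt] subset_iff)
  have "\<Omega> - S \<in> sets ?\<nu>"
    using sets.Diff[OF sets.top finite_subset_in_sets_borelOn[OF cpt S]] by simp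
  moreover have "emeasure ?\<nu> (\<Omega> - S) = 0"
    using calculation by (simp add: emeasure_finite_point_measure)
  ultimately have "AE x in ?\<nu>. f x = (\<Sum>y\<in>S. f y * indicator {y} x)"
    using S(1) by (intro AE_I'[of "\<Omega> - S"]) (auto simp: indicator_def sum.delta' cong: if_cong)
  then have "(\<integral>\<^sup>+x. f x \<partial>?\<nu>) = (\<integral>\<^sup>+x. (\<Sum>y\<in>S. f y * indicator {y} x) \<partial>?\<nu>)"
    by (rule nn_integral_cong_AE)
  also have "\<dots> = (\<Sum>y\<in>S. \<integral>\<^sup>+x. f y * indicator {y} x \<partial>?\<nu>)"
    using S(1) singleton
    by (intro nn_integral_sum borel_measurable_times_ennreal borel_measurable_indicator) auto
  also have "\<dots> = (\<Sum>y\<in>S. f y * ennreal (w y))"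
    using S singleton by (intro sum.cong refl) (auto simp: emeasure_finite_point_measure)
  finally show ?thesis .
qed

lemma integral_finite_point_measure:
  assumes "\<And>y. 0 \<le> w y" "f \<in> borel_measurable (borelOn \<Omega>)"
  shows "(\<integral>x. f x \<partial>finite_point_measure \<Omega> S w) = (\<Sum>y\<in>S. w y * f y)"
  unfolding finite_point_measure_def using S assms
  by (subst integral_distr) (auto simp: lebesgue_integral_point_measure_finite)

lemma prob_on_finite_point_measure:
  assumes w: "\<And>y. 0 \<le> w y" and "(\<Sum>y\<in>S. w y) = 1"
  shows "prob_on \<Omega> (finite_point_measure \<Omega> S w)"
proof -
  have "emeasure (finite_point_measure \<Omega> S w) \<Omega> = ennreal (\<Sum>y\<in>S. w y)"
    using S w sets.top[of "borelOn \<Omega>"]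
    by (simp add: emeasure_finite_point_measure Int_absorb2 sum_ennreal)
  then have "prob_space (finite_point_measure \<Omega> S w)"
    using assms(2) by (intro prob_spaceI) simp
  then show ?thesis unfolding prob_on_def by simp
qed

end

lemma prob_on_return: "x \<in> \<Omega> \<Longrightarrow> prob_on \<Omega> (return (borelOn \<Omega>) x)"
  unfolding prob_on_def by (auto intro: prob_space_return)

lemma prob_on_imp_nonempty: "prob_on \<Omega> M \<Longrightarrow> \<Omega> \<noteq> {}"
  using prob_space.not_empty sets_eq_imp_space_eq[of M "borelOn \<Omega>"] by (force simp: prob_on_def)

lemma pair_measure_in_couplings:
  fixes \<Omega> :: "'a::metric_space set"
  assumes M: "prob_on \<Omega> M" and N: "prob_on \<Omega> N"
  shows "M \<Otimes>\<^sub>M N \<in> couplings \<Omega> M N"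
proof -
  have pM: "prob_space M" and sM: "sets M = sets (borelOn \<Omega>)"
    and pN: "prob_space N" and sN: "sets N = sets (borelOn \<Omega>)"
    using M N unfolding prob_on_def by auto
  have "distr (M \<Otimes>\<^sub>M N) (borelOn \<Omega>) fst = distr (M \<Otimes>\<^sub>M N) M fst"
    using sM by (intro distr_cong) auto
  also have "\<dots> = M" by (rule prob_space.distr_pair_fst[OF pN])
  finally have fst_marginal: "distr (M \<Otimes>\<^sub>M N) (borelOn \<Omega>) fst = M" .
  have snd_marginal: "distr (M \<Otimes>\<^sub>M N) (borelOn \<Omega>) snd = N"
  proof (rule measure_eqI)
    fix B assume "B \<in> sets (distr (M \<Otimes>\<^sub>M N) (borelOn \<Omega>) snd)"
    then have B: "B \<in> sets N" using sN by simp
    have "snd \<in> measurable (M \<Otimes>\<^sub>M N) (borelOn \<Omega>)"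
      by (subst measurable_cong_sets[OF refl sN, symmetric]) (rule measurable_snd)
    moreover have "snd -` B \<inter> space (M \<Otimes>\<^sub>M N) = space M \<times> B"
      using sets.sets_into_space[OF B] by (auto simp: space_pair_measure)
    ultimately have "emeasure (distr (M \<Otimes>\<^sub>M N) (borelOn \<Omega>) snd) B = emeasure (M \<Otimes>\<^sub>M N) (space M \<times> B)"
      using B sN by (simp add: emeasure_distr)
    also have "\<dots> = emeasure N B"
      using B pM pN by (simp add: sigma_finite_measure.emeasure_pair_measure_Times
          prob_space_imp_sigma_finite prob_space.emeasure_space_1)
    finally show "emeasure (distr (M \<Otimes>\<^sub>M N) (borelOn \<Omega>) snd) B = emeasure N B" .
  qed (use sN in simp)
  show ?thesis
    unfolding couplings_def using prob_space_pair[OF pM pN] sets_pair_measure_cong[OF sM sN]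
      fst_marginal snd_marginal by auto
qed

lemma couplingsD:
  fixes \<Omega> :: "'a::metric_space set"
  assumes cpt: "compact \<Omega>" and \<pi>: "\<pi> \<in> couplings \<Omega> M N"
  shows "prob_space \<pi>" and "space \<pi> = \<Omega> \<times> \<Omega>"
    and "fst \<in> measurable \<pi> (borelOn \<Omega>)" and "snd \<in> measurable \<pi> (borelOn \<Omega>)"
    and "integrable \<pi> (\<lambda>p. dist (fst p) (snd p))"
    and "distr \<pi> (borelOn \<Omega>) fst = M" and "distr \<pi> (borelOn \<Omega>) snd = N"
proof -
  have s: "sets \<pi> = sets (borelOn \<Omega> \<Otimes>\<^sub>M borelOn \<Omega>)" and p: "prob_space \<pi>"
    using \<pi> unfolding couplings_def by blast+
  show "prob_space \<pi>" by (fact p)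
  show sp: "space \<pi> = \<Omega> \<times> \<Omega>"
    using sets_eq_imp_space_eq[OF s] by (simp add: space_pair_measure)
  show "fst \<in> measurable \<pi> (borelOn \<Omega>)" "snd \<in> measurable \<pi> (borelOn \<Omega>)"
    by (simp_all add: measurable_cong_sets[OF s refl])
  show "distr \<pi> (borelOn \<Omega>) fst = M" "distr \<pi> (borelOn \<Omega>) snd = N"
    using \<pi> unfolding couplings_def by blast+
  have "(\<lambda>p. dist (fst p) (snd p)) \<in> borel_measurable \<pi>"
    using borel_measurable_dist_borelOn[OF cpt] by (simp add: measurable_cong_sets[OF s refl])
  then show "integrable \<pi> (\<lambda>p. dist (fst p) (snd p))"
    using p sp diameter_bounded_bound[OF compact_imp_bounded[OF cpt]]
    by (intro finite_measure.integrable_const_bound[where B = "diameter \<Omega>"] AE_I2)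
      (auto simp: prob_space_def mem_Times_iff)
qed

lemma W1_le_integral_coupling:
  "\<pi> \<in> couplings \<Omega> M N \<Longrightarrow> W1 \<Omega> M N \<le> (\<integral>p. dist (fst p) (snd p) \<partial>\<pi>)"
  unfolding W1_def by (rule cInf_lower) (auto intro!: bdd_belowI[of _ 0] integral_nonneg_AE)

lemma lipschitz_integral_diff_le_W1:
  fixes \<Omega> :: "'a::metric_space set"
  assumes cpt: "compact \<Omega>" and M: "prob_on \<Omega> M" and N: "prob_on \<Omega> N"
    and \<zeta>: "L-lipschitz_on \<Omega> \<zeta>"
  shows "\<bar>(\<integral>x. \<zeta> x \<partial>M) - (\<integral>x. \<zeta> x \<partial>N)\<bar> \<le> L * W1 \<Omega> M N"
proof -
  have \<zeta>_cont: "continuous_on \<Omega> \<zeta>" by (rule lipschitz_on_continuous_on[OF \<zeta>])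
  note \<zeta>_meas = borel_measurable_borelOn_continuous_on[OF \<zeta>_cont]
  have coupling_bound: "\<bar>(\<integral>x. \<zeta> x \<partial>M) - (\<integral>x. \<zeta> x \<partial>N)\<bar> \<le> L * (\<integral>p. dist (fst p) (snd p) \<partial>\<pi>)"
    if \<pi>: "\<pi> \<in> couplings \<Omega> M N" for \<pi>
  proof -
    note c = couplingsD[OF cpt \<pi>]
    have int_fst: "integrable \<pi> (\<lambda>p. \<zeta> (fst p))"
      using integrable_prob_on_continuous_on[OF cpt M \<zeta>_cont] c(6)
        integrable_distr_eq[OF c(3) \<zeta>_meas] by simp
    have int_snd: "integrable \<pi> (\<lambda>p. \<zeta> (snd p))"
      using integrable_prob_on_continuous_on[OF cpt N \<zeta>_cont] c(7)
        integrable_distr_eq[OF c(4) \<zeta>_meas] by simp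
    have "(\<integral>x. \<zeta> x \<partial>M) - (\<integral>x. \<zeta> x \<partial>N) = (\<integral>p. \<zeta> (fst p) - \<zeta> (snd p) \<partial>\<pi>)"
      using integral_distr[OF c(3) \<zeta>_meas] integral_distr[OF c(4) \<zeta>_meas] c(6,7) int_fst int_snd
      by simp
    also have "\<bar>\<dots>\<bar> \<le> (\<integral>p. \<bar>\<zeta> (fst p) - \<zeta> (snd p)\<bar> \<partial>\<pi>)"
      using integral_norm_bound[of \<pi> "\<lambda>p. \<zeta> (fst p) - \<zeta> (snd p)"] by simp
    also have "\<dots> \<le> (\<integral>p. L * dist (fst p) (snd p) \<partial>\<pi>)"
      using lipschitz_onD[OF \<zeta>] int_fst int_snd c(2,5)
      by (intro integral_mono) (auto simp: dist_real_def mem_Times_iff)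
    finally show ?thesis by simp
  qed
  have L: "0 \<le> L" using \<zeta> by (rule lipschitz_on_nonneg)
  have "couplings \<Omega> M N \<noteq> {}" using pair_measure_in_couplings[OF M N] by auto
  then show ?thesis
  proof (cases "L = 0")
    case True
    then show ?thesis using coupling_bound \<open>couplings \<Omega> M N \<noteq> {}\<close> by fastforce
  next
    case False
    then have "\<bar>(\<integral>x. \<zeta> x \<partial>M) - (\<integral>x. \<zeta> x \<partial>N)\<bar> / L \<le> W1 \<Omega> M N"
      unfolding W1_def using \<open>couplings \<Omega> M N \<noteq> {}\<close> coupling_bound L
      by (intro cInf_greatest) (auto simp: divide_le_eq mult.commute)
    then show ?thesis using False L by (simp add: divide_le_eq mult.commute)
  qed
qed

lemma W1_return_le_dist:
  fixes \<Omega> :: "'a::metric_space set"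
  assumes cpt: "compact \<Omega>" and "x \<in> \<Omega>" "y \<in> \<Omega>"
  shows "W1 \<Omega> (return (borelOn \<Omega>) x) (return (borelOn \<Omega>) y) \<le> dist x y"
proof -
  let ?\<pi> = "return (borelOn \<Omega> \<Otimes>\<^sub>M borelOn \<Omega>) (x, y)"
  have xy: "(x, y) \<in> space (borelOn \<Omega> \<Otimes>\<^sub>M borelOn \<Omega>)"
    using assms by (simp add: space_pair_measure)
  have "?\<pi> \<in> couplings \<Omega> (return (borelOn \<Omega>) x) (return (borelOn \<Omega>) y)"
    unfolding couplings_def
    using prob_space_return[OF xy] distr_return[OF measurable_fst xy] distr_return[OF measurable_snd xy]
    by simp
  then have "W1 \<Omega> (return (borelOn \<Omega>) x) (return (borelOn \<Omega>) y) \<le> (\<integral>p. dist (fst p) (snd p) \<partial>?\<pi>)"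
    by (rule W1_le_integral_coupling)
  also have "\<dots> = dist x y"
    using integral_return[OF xy borel_measurable_dist_borelOn[OF cpt]] by simp
  finally show ?thesis .
qed

lemma W1_le_diameter:
  fixes \<Omega> :: "'a::metric_space set"
  assumes cpt: "compact \<Omega>" and M: "prob_on \<Omega> M" and N: "prob_on \<Omega> N"
  shows "W1 \<Omega> M N \<le> diameter \<Omega>"
proof -
  let ?\<pi> = "M \<Otimes>\<^sub>M N"
  have \<pi>: "?\<pi> \<in> couplings \<Omega> M N" by (rule pair_measure_in_couplings[OF M N])
  note c = couplingsD[OF cpt \<pi>]
  have "W1 \<Omega> M N \<le> (\<integral>p. dist (fst p) (snd p) \<partial>?\<pi>)"
    by (rule W1_le_integral_coupling[OF \<pi>])
  also have "\<dots> \<le> (\<integral>p. diameter \<Omega> \<partial>?\<pi>)"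
    using c(1,2,5) diameter_bounded_bound[OF compact_imp_bounded[OF cpt]]
    by (intro integral_mono finite_measure.integrable_const) (auto simp: prob_space_def mem_Times_iff)
  also have "\<dots> = diameter \<Omega>"
    using prob_space.prob_space[OF c(1)] by simp
  finally show ?thesis .
qed

lemma lipschitz_on_Lip:
  assumes "\<exists>L. L-lipschitz_on \<Omega> f"
  shows "(Lip \<Omega> f)-lipschitz_on \<Omega> f"
proof -
  have ne: "{L. L-lipschitz_on \<Omega> f} \<noteq> {}" using assms by auto
  have "dist (f x) (f y) / dist x y \<le> Lip \<Omega> f" if "x \<in> \<Omega>" "y \<in> \<Omega>" "x \<noteq> y" for x y
    unfolding Lip_def using that lipschitz_onD
    by (intro cInf_greatest[OF ne]) (fastforce simp: divide_le_eq)
  then have "dist (f x) (f y) \<le> Lip \<Omega> f * dist x y" if "x \<in> \<Omega>" "y \<in> \<Omega>" for x y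
    using that by (cases "x = y") (auto simp: divide_le_eq)
  moreover have "0 \<le> Lip \<Omega> f"
    unfolding Lip_def using ne by (intro cInf_greatest) (auto simp: lipschitz_on_def)
  ultimately show ?thesis by (auto simp: lipschitz_on_def)
qed

lemma Lip_le: "K-lipschitz_on \<Omega> f \<Longrightarrow> Lip \<Omega> f \<le> K"
  unfolding Lip_def by (rule cInf_lower) (auto intro!: bdd_belowI[of _ 0] simp: lipschitz_on_def)

lemma sum_mset_eq_sum_count:
  fixes g :: "'a \<Rightarrow> 'b::comm_semiring_1"
  assumes "finite T" "set_mset M \<subseteq> T"
  shows "(\<Sum>z\<in>#M. g z) = (\<Sum>z\<in>T. of_nat (count M z) * g z)"
  using assms(2)
proof (induction M)
  case empty
  then show ?case by simp
next
  case (add a M)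
  then have "a \<in> T" "set_mset M \<subseteq> T" by auto
  have "(\<Sum>z\<in>T. of_nat (count (add_mset a M) z) * g z)
      = (\<Sum>z\<in>T. of_nat (count M z) * g z + (if z = a then g z else 0))"
    by (rule sum.cong) (auto simp: algebra_simps)
  also have "\<dots> = (\<Sum>z\<in>T. of_nat (count M z) * g z) + g a"
    using \<open>a \<in> T\<close> assms(1) by (simp add: sum.distrib sum.delta')
  finally show ?case using add.IH[OF \<open>set_mset M \<subseteq> T\<close>] by (simp add: add.commute)
qed

lemma sum_mset_pos:
  fixes f :: "'a \<Rightarrow> 'b::ordered_cancel_comm_monoid_add"
  assumes "M \<noteq> {#}" "\<And>y. y \<in># M \<Longrightarrow> 0 < f y"
  shows "0 < (\<Sum>y\<in>#M. f y)"
  using assms by (induction M) (fastforce intro: add_pos_pos)+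

lemma lipschitz_on_divide:
  fixes g h :: "'a::metric_space \<Rightarrow> real"
  assumes g: "Lg-lipschitz_on S g" and h: "Lh-lipschitz_on S h"
    and g_bound: "\<And>x. x \<in> S \<Longrightarrow> \<bar>g x\<bar> \<le> G" and G: "0 \<le> G"
    and h_lower: "\<And>x. x \<in> S \<Longrightarrow> m \<le> h x" and m: "0 < m"
  shows "(Lg / m + G * Lh / m\<^sup>2)-lipschitz_on S (\<lambda>x. g x / h x)"
proof (rule lipschitz_onI)
  have Lg: "0 \<le> Lg" and Lh: "0 \<le> Lh" using g h by (simp_all add: lipschitz_on_nonneg)
  then show "0 \<le> Lg / m + G * Lh / m\<^sup>2" using G m by simp
  fix x y assume x: "x \<in> S" and y: "y \<in> S"
  have hx: "m \<le> h x" and hy: "m \<le> h y" using h_lower x y by auto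
  have "dist (g x / h x) (g y / h y) = \<bar>(g x - g y) / h x + g y * (h y - h x) / (h x * h y)\<bar>"
    using hx hy m by (simp add: dist_real_def field_simps)
  also have "\<dots> \<le> \<bar>(g x - g y) / h x\<bar> + \<bar>g y * (h y - h x) / (h x * h y)\<bar>"
    by (rule abs_triangle_ineq)
  also have "\<bar>(g x - g y) / h x\<bar> \<le> Lg * dist x y / m"
    using lipschitz_onD[OF g x y] hx m Lg
    by (simp add: abs_divide dist_real_def) (intro frac_le; simp)
  also have "\<bar>g y * (h y - h x) / (h x * h y)\<bar> \<le> G * (Lh * dist x y) / m\<^sup>2"
  proof -
    have "\<bar>g y * (h y - h x)\<bar> \<le> G * (Lh * dist x y)"
      using g_bound[OF y] lipschitz_onD[OF h y x] G
      by (simp add: abs_mult dist_real_def dist_commute mult_mono')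
    moreover have "m\<^sup>2 \<le> \<bar>h x * h y\<bar>"
      using hx hy m by (simp add: power2_eq_square abs_mult mult_mono')
    ultimately show ?thesis
      using m G Lh by (simp add: abs_divide) (intro frac_le; simp)
  qed
  finally show "dist (g x / h x) (g y / h y) \<le> (Lg / m + G * Lh / m\<^sup>2) * dist x y"
    by (simp add: algebra_simps add_divide_distrib)
qed

lemma lipschitz_on_divide_compact:
  fixes g h :: "'a::metric_space \<Rightarrow> real"
  assumes S: "compact S" and g: "Lg-lipschitz_on S g" and h: "Lh-lipschitz_on S h"
    and h_pos: "\<And>x. x \<in> S \<Longrightarrow> 0 < h x"
  shows "\<exists>K. K-lipschitz_on S (\<lambda>x. g x / h x)"
proof (cases "S = {}")
  case False
  obtain x0 where x0: "x0 \<in> S" "\<And>x. x \<in> S \<Longrightarrow> h x0 \<le> h x"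
    using continuous_attains_inf[OF S False lipschitz_on_continuous_on[OF h]] by auto
  obtain G where "\<And>x. x \<in> S \<Longrightarrow> \<bar>g x\<bar> \<le> G"
    using compact_imp_bounded[OF compact_continuous_image[OF lipschitz_on_continuous_on[OF g] S]]
    unfolding bounded_iff by auto
  moreover from this have "0 \<le> G" using x0(1) by force
  ultimately show ?thesis
    using lipschitz_on_divide[OF g h] x0 h_pos by blast
qed (auto intro: lipschitz_on_constant)

text \<open>The normalizing eigenfunction \<open>h\<close> turns \<open>\<P>\<close> into a Markov operator: \<open>\<P>\<close> is
  averaging against the transition weights below, which sum to \<open>1\<close> over \<open>F y\<close>.\<close>
locale normalized_transfer =
  fixes \<Omega> :: "'a::metric_space set" and F :: "'a \<Rightarrow> 'a multiset"
    and A h :: "'a \<Rightarrow> real" and \<rho> :: real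
  assumes compact_Omega: "compact \<Omega>"
    and F_into: "\<And>x. x \<in> \<Omega> \<Longrightarrow> set_mset (F x) \<subseteq> \<Omega>"
    and h_pos: "\<And>x. x \<in> \<Omega> \<Longrightarrow> 0 < h x"
    and rho_pos: "0 < \<rho>"
    and h_eigen: "\<And>x. x \<in> \<Omega> \<Longrightarrow> transfer F A h x = \<rho> * h x"
begin

abbreviation \<P> :: "('a \<Rightarrow> real) \<Rightarrow> 'a \<Rightarrow> real" where "\<P> \<equiv> Pnorm F A \<rho> h"

abbreviation \<P>dual :: "'a measure \<Rightarrow> 'a measure" where "\<P>dual \<equiv> Pdual \<Omega> \<P>"

definition transition_weight :: "'a \<Rightarrow> 'a \<Rightarrow> real" where
  "transition_weight y z = real (count (F y) z) * exp (A z) * h z / (\<rho> * h y)"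

lemma Pnorm_eq_sum_transition_weight:
  assumes "finite T" "set_mset (F y) \<subseteq> T"
  shows "\<P> \<phi> y = (\<Sum>z\<in>T. transition_weight y z * \<phi> z)"
  using sum_mset_eq_sum_count[OF assms, of "\<lambda>z. exp (A z) * (h z * \<phi> z)"]
  by (simp add: Pnorm_def transfer_def transition_weight_def sum_divide_distrib mult.assoc)

lemma transition_weight_nonneg: "y \<in> \<Omega> \<Longrightarrow> 0 \<le> transition_weight y z"
  using F_into[of y] h_pos[of y] h_pos[of z] rho_pos
  by (cases "z \<in># F y") (auto simp: transition_weight_def not_in_iff intro!: divide_nonneg_pos)

lemma Pnorm_cong: "y \<in> \<Omega> \<Longrightarrow> (\<And>z. z \<in> \<Omega> \<Longrightarrow> f z = g z) \<Longrightarrow> \<P> f y = \<P> g y"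
  using F_into[of y]
  by (auto simp: Pnorm_eq_sum_transition_weight[of "set_mset (F y)"] intro!: sum.cong)

lemma Pnorm_const:
  assumes "y \<in> \<Omega>"
  shows "\<P> (\<lambda>_. c) y = c"
proof -
  have "transfer F A (\<lambda>z. h z * c) y = c * transfer F A h y"
    by (simp add: transfer_def sum_mset_distrib_left mult_ac)
  then show ?thesis using h_eigen[OF assms] h_pos[OF assms] rho_pos by (simp add: Pnorm_def)
qed

lemma Pnorm_diff_const: "y \<in> \<Omega> \<Longrightarrow> \<P> (\<lambda>z. f z - c) y = \<P> f y - c"
  using Pnorm_const[of y 1] Pnorm_const[of y c]
  by (simp add: Pnorm_eq_sum_transition_weight[of "set_mset (F y)"] algebra_simps
      sum_subtractf sum_distrib_left)

lemma Pnorm_iter_const: "y \<in> \<Omega> \<Longrightarrow> (\<P> ^^ n) (\<lambda>_. c) y = c"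
proof (induction n arbitrary: y)
  case (Suc n)
  then show ?case using Pnorm_cong[of y _ "\<lambda>_. c"] Pnorm_const by simp
qed simp

lemma Pnorm_iter_diff_const: "y \<in> \<Omega> \<Longrightarrow> (\<P> ^^ n) (\<lambda>z. f z - c) y = (\<P> ^^ n) f y - c"
proof (induction n arbitrary: y)
  case (Suc n)
  then show ?case
    using Pnorm_cong[of y _ "\<lambda>z. (\<P> ^^ n) f z - c"] Pnorm_diff_const by simp
qed simp

definition push_support :: "'a set \<Rightarrow> 'a set" where
  "push_support S = (\<Union>y\<in>S. set_mset (F y))"

definition push_weight :: "'a set \<Rightarrow> ('a \<Rightarrow> real) \<Rightarrow> 'a \<Rightarrow> real" where
  "push_weight S w z = (\<Sum>y\<in>S. w y * transition_weight y z)"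

lemma finite_push_support: "finite S \<Longrightarrow> finite (push_support S)"
  by (simp add: push_support_def)

lemma push_support_subset: "S \<subseteq> \<Omega> \<Longrightarrow> push_support S \<subseteq> \<Omega>"
  using F_into by (auto simp: push_support_def)

lemma push_weight_nonneg: "S \<subseteq> \<Omega> \<Longrightarrow> (\<And>y. 0 \<le> w y) \<Longrightarrow> 0 \<le> push_weight S w z"
  unfolding push_weight_def using transition_weight_nonneg
  by (intro sum_nonneg mult_nonneg_nonneg) auto

lemma sum_push_weight:
  assumes "finite S"
  shows "(\<Sum>z\<in>push_support S. push_weight S w z * \<phi> z) = (\<Sum>y\<in>S. w y * \<P> \<phi> y)"
proof -
  have "(\<Sum>z\<in>push_support S. push_weight S w z * \<phi> z)
      = (\<Sum>y\<in>S. w y * (\<Sum>z\<in>push_support S. transition_weight y z * \<phi> z))"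
    unfolding push_weight_def
    by (simp add: sum_distrib_right sum_distrib_left mult_ac sum.swap[of _ "push_support S"])
  also have "\<dots> = (\<Sum>y\<in>S. w y * \<P> \<phi> y)"
    using assms by (intro sum.cong refl arg_cong2[where f = "(*)"]
        Pnorm_eq_sum_transition_weight[symmetric]) (auto simp: push_support_def)
  finally show ?thesis .
qed

lemma Pdual_finite_point_measure:
  assumes S: "finite S" "S \<subseteq> \<Omega>" and w: "\<And>y. 0 \<le> w y"
  shows "\<P>dual (finite_point_measure \<Omega> S w) = finite_point_measure \<Omega> (push_support S) (push_weight S w)"
    (is "_ = ?\<nu>")
proof -
  note S' = finite_push_support[OF S(1)] push_support_subset[OF S(2)]
  have "emeasure ?\<nu> B = (\<integral>\<^sup>+ x. ennreal (\<P> (indicator B) x) \<partial>finite_point_measure \<Omega> S w)"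
    if B: "B \<in> sets (borelOn \<Omega>)" for B
  proof -
    have P_nonneg: "0 \<le> \<P> (indicator B) y" if "y \<in> S" for y
      using that S transition_weight_nonneg
      by (auto simp: Pnorm_eq_sum_transition_weight[of "set_mset (F y)"] intro!: sum_nonneg)
    have "(\<Sum>z\<in>push_support S \<inter> B. push_weight S w z)
        = (\<Sum>z\<in>push_support S. push_weight S w z * indicator B z)"
      using S'(1) by (simp add: indicator_def sum.inter_filter Int_def cong: if_cong)
    also have "\<dots> = (\<Sum>y\<in>S. w y * \<P> (indicator B) y)"
      by (rule sum_push_weight[OF S(1)])
    finally have "emeasure ?\<nu> B = ennreal (\<Sum>y\<in>S. w y * \<P> (indicator B) y)"
      using push_weight_nonneg[OF S(2) w]
      by (simp add: emeasure_finite_point_measure[OF compact_Omega S' B]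
          sum_ennreal)
    also have "\<dots> = (\<Sum>y\<in>S. ennreal (\<P> (indicator B) y) * ennreal (w y))"
      using P_nonneg w by (simp add: ennreal_mult mult.commute flip: sum_ennreal)
    also have "\<dots> = (\<integral>\<^sup>+ x. ennreal (\<P> (indicator B) x) \<partial>finite_point_measure \<Omega> S w)"
      by (simp add: nn_integral_finite_point_measure[OF compact_Omega S])
    finally show ?thesis .
  qed
  then have "measure_of \<Omega> (sets (borelOn \<Omega>)) (emeasure ?\<nu>)
      = measure_of \<Omega> (sets (borelOn \<Omega>))
          (\<lambda>B. \<integral>\<^sup>+ x. ennreal (\<P> (indicator B) x) \<partial>finite_point_measure \<Omega> S w)"
    using sets.space_closed[of "borelOn \<Omega>"]
    by (intro measure_of_eq) (auto simp: sets.sigma_sets_eq[of "borelOn \<Omega>", simplified])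
  then show ?thesis
    using measure_of_of_measure[of ?\<nu>] unfolding Pdual_def by simp
qed

lemma Pdual_iter_return_eq_finite_point_measure:
  assumes x: "x \<in> \<Omega>"
  obtains S w where "finite S" "S \<subseteq> \<Omega>" "\<And>y. 0 \<le> w y"
    "(\<P>dual ^^ n) (return (borelOn \<Omega>) x) = finite_point_measure \<Omega> S w"
    "\<And>\<phi>. (\<Sum>y\<in>S. w y * \<phi> y) = (\<P> ^^ n) \<phi> x"
proof -
  have "\<exists>S w. finite S \<and> S \<subseteq> \<Omega> \<and> (\<forall>y. 0 \<le> w y) \<and>
    (\<P>dual ^^ n) (return (borelOn \<Omega>) x) = finite_point_measure \<Omega> S w \<and>
    (\<forall>\<phi>. (\<Sum>y\<in>S. w y * \<phi> y) = (\<P> ^^ n) \<phi> x)"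
  proof (induction n)
    case 0
    have "return (borelOn \<Omega>) x = finite_point_measure \<Omega> {x} (\<lambda>_. 1)"
      using x by (intro measure_eqI)
        (auto simp: emeasure_finite_point_measure[OF compact_Omega] indicator_def)
    then show ?case using x by (intro exI[of _ "{x}"] exI[of _ "\<lambda>_. 1"]) auto
  next
    case (Suc n)
    then obtain S w where S: "finite S" "S \<subseteq> \<Omega>" and w: "\<forall>y. 0 \<le> w y"
      and eq: "(\<P>dual ^^ n) (return (borelOn \<Omega>) x) = finite_point_measure \<Omega> S w"
      and sum_eq: "\<forall>\<phi>. (\<Sum>y\<in>S. w y * \<phi> y) = (\<P> ^^ n) \<phi> x" by blast
    have "(\<Sum>z\<in>push_support S. push_weight S w z * \<phi> z) = (\<P> ^^ Suc n) \<phi> x" for \<phi>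
      using sum_push_weight[OF S(1)] sum_eq by (simp only: funpow_Suc_right comp_def)
    then show ?case
      using finite_push_support[OF S(1)] push_support_subset[OF S(2)] push_weight_nonneg[OF S(2)] w eq
        Pdual_finite_point_measure[OF S]
      by (intro exI[of _ "push_support S"] exI[of _ "push_weight S w"]) auto
  qed
  then show ?thesis using that by blast
qed

text \<open>The iterates of \<open>\<P>dual\<close> on a Dirac mass represent the iterates of \<open>\<P>\<close>; this is the
  only instance of the duality \<open>\<integral>\<phi> d(\<P>dual \<mu>) = \<integral>\<P>\<phi> d\<mu>\<close> that is needed.\<close>
lemma Pdual_iter_return:
  assumes x: "x \<in> \<Omega>"
  shows "prob_on \<Omega> ((\<P>dual ^^ n) (return (borelOn \<Omega>) x))"
    and "continuous_on \<Omega> \<zeta> \<Longrightarrow> (\<integral>y. \<zeta> y \<partial>(\<P>dual ^^ n) (return (borelOn \<Omega>) x)) = (\<P> ^^ n) \<zeta> x"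
proof -
  obtain S w where S: "finite S" "S \<subseteq> \<Omega>" and w: "\<And>y. 0 \<le> w y"
    and eq: "(\<P>dual ^^ n) (return (borelOn \<Omega>) x) = finite_point_measure \<Omega> S w"
    and sum_eq: "\<And>\<phi>. (\<Sum>y\<in>S. w y * \<phi> y) = (\<P> ^^ n) \<phi> x"
    using Pdual_iter_return_eq_finite_point_measure[OF x] by blast
  show "prob_on \<Omega> ((\<P>dual ^^ n) (return (borelOn \<Omega>) x))"
    using sum_eq[of "\<lambda>_. 1"] Pnorm_iter_const[OF x] w
    by (simp add: eq prob_on_finite_point_measure[OF compact_Omega S])
  show "(\<integral>y. \<zeta> y \<partial>(\<P>dual ^^ n) (return (borelOn \<Omega>) x)) = (\<P> ^^ n) \<zeta> x"
    if "continuous_on \<Omega> \<zeta>"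
    using integral_finite_point_measure[OF compact_Omega S w] sum_eq
      borel_measurable_borelOn_continuous_on[OF that]
    by (simp add: eq)
qed

lemma Pnorm_iter_fixed: "(\<And>z. z \<in> \<Omega> \<Longrightarrow> \<P> \<psi> z = \<psi> z) \<Longrightarrow> y \<in> \<Omega> \<Longrightarrow> (\<P> ^^ n) \<psi> y = \<psi> y"
proof (induction n arbitrary: y)
  case (Suc n)
  then show ?case using Pnorm_cong[of y "(\<P> ^^ n) \<psi>" \<psi>] by simp
qed simp

lemma Pnorm_divide_eigenfunction:
  assumes g: "\<And>x. x \<in> \<Omega> \<Longrightarrow> transfer F A g x = \<rho> * g x" and x: "x \<in> \<Omega>"
  shows "\<P> (\<lambda>z. g z / h z) x = g x / h x"
proof -
  have "transfer F A (\<lambda>z. h z * (g z / h z)) x = transfer F A g x"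
    unfolding transfer_def
  proof (intro arg_cong[where f = sum_mset] image_mset_cong)
    fix z assume "z \<in># F x"
    then have "0 < h z" using F_into[OF x] h_pos by blast
    then show "exp (A z) * (h z * (g z / h z)) = exp (A z) * g z" by simp
  qed
  then show ?thesis using g[OF x] h_pos[OF x] rho_pos by (simp add: Pnorm_def)
qed

end

locale W1_contracting_transfer = normalized_transfer +
  fixes C lam :: real
  assumes C_nonneg: "0 \<le> C" and lam_nonneg: "0 \<le> lam"
    and W1_Pdual_iter_le: "\<And>M N n. prob_on \<Omega> M \<Longrightarrow> prob_on \<Omega> N \<Longrightarrow>
      W1 \<Omega> ((Pdual \<Omega> (Pnorm F A \<rho> h) ^^ n) M) ((Pdual \<Omega> (Pnorm F A \<rho> h) ^^ n) N)
        \<le> C * lam ^ n * W1 \<Omega> M N"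
begin

lemma Pnorm_iter_lipschitz:
  assumes \<zeta>: "L-lipschitz_on \<Omega> \<zeta>"
  shows "(C * lam ^ n * L)-lipschitz_on \<Omega> ((\<P> ^^ n) \<zeta>)"
proof (rule lipschitz_onI)
  have L: "0 \<le> L" using \<zeta> by (rule lipschitz_on_nonneg)
  then show "0 \<le> C * lam ^ n * L" using C_nonneg lam_nonneg by simp
  fix x y assume x: "x \<in> \<Omega>" and y: "y \<in> \<Omega>"
  let ?Mx = "(\<P>dual ^^ n) (return (borelOn \<Omega>) x)" and ?My = "(\<P>dual ^^ n) (return (borelOn \<Omega>) y)"
  have \<zeta>_cont: "continuous_on \<Omega> \<zeta>" by (rule lipschitz_on_continuous_on[OF \<zeta>])
  have "dist ((\<P> ^^ n) \<zeta> x) ((\<P> ^^ n) \<zeta> y) = \<bar>(\<integral>z. \<zeta> z \<partial>?Mx) - (\<integral>z. \<zeta> z \<partial>?My)\<bar>"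
    using Pdual_iter_return(2)[OF x \<zeta>_cont] Pdual_iter_return(2)[OF y \<zeta>_cont]
    by (simp add: dist_real_def)
  also have "\<dots> \<le> L * W1 \<Omega> ?Mx ?My"
    using Pdual_iter_return(1)[OF x] Pdual_iter_return(1)[OF y]
    by (rule lipschitz_integral_diff_le_W1[OF compact_Omega _ _ \<zeta>])
  also have "\<dots> \<le> L * (C * lam ^ n * W1 \<Omega> (return (borelOn \<Omega>) x) (return (borelOn \<Omega>) y))"
    using W1_Pdual_iter_le prob_on_return[OF x] prob_on_return[OF y] L by (intro mult_left_mono) auto
  also have "\<dots> \<le> L * (C * lam ^ n * dist x y)"
    using W1_return_le_dist[OF compact_Omega x y] L C_nonneg lam_nonneg
    by (intro mult_left_mono) auto
  finally show "dist ((\<P> ^^ n) \<zeta> x) ((\<P> ^^ n) \<zeta> y) \<le> C * lam ^ n * L * dist x y"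
    by (simp add: mult_ac)
qed

lemma Pnorm_iter_centered_bound:
  assumes \<zeta>: "L-lipschitz_on \<Omega> \<zeta>" and \<mu>: "prob_on \<Omega> \<mu>" "\<P>dual \<mu> = \<mu>"
    and centered: "(\<integral>x. \<zeta> x \<partial>\<mu>) = 0" and x: "x \<in> \<Omega>"
  shows "\<bar>(\<P> ^^ n) \<zeta> x\<bar> \<le> C * lam ^ n * L * diameter \<Omega>"
proof -
  let ?Mx = "(\<P>dual ^^ n) (return (borelOn \<Omega>) x)"
  have L: "0 \<le> L" using \<zeta> by (rule lipschitz_on_nonneg)
  have \<mu>_iter: "(\<P>dual ^^ n) \<mu> = \<mu>" using \<mu>(2) by (induction n) simp_all
  have "\<bar>(\<P> ^^ n) \<zeta> x\<bar> = \<bar>(\<integral>z. \<zeta> z \<partial>?Mx) - (\<integral>z. \<zeta> z \<partial>\<mu>)\<bar>"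
    using Pdual_iter_return(2)[OF x lipschitz_on_continuous_on[OF \<zeta>]] centered by simp
  also have "\<dots> \<le> L * W1 \<Omega> ?Mx \<mu>"
    by (rule lipschitz_integral_diff_le_W1[OF compact_Omega Pdual_iter_return(1)[OF x] \<mu>(1) \<zeta>])
  also have "\<dots> \<le> L * (C * lam ^ n * W1 \<Omega> (return (borelOn \<Omega>) x) \<mu>)"
    using W1_Pdual_iter_le[OF prob_on_return[OF x] \<mu>(1), of n] \<mu>_iter L
    by (intro mult_left_mono) auto
  also have "\<dots> \<le> L * (C * lam ^ n * diameter \<Omega>)"
    using W1_le_diameter[OF compact_Omega prob_on_return[OF x] \<mu>(1)] L C_nonneg lam_nonneg
    by (intro mult_left_mono) auto
  finally show ?thesis by (simp add: mult_ac)
qed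

lemma supnorm_add_Lip_Pnorm_iter_le:
  assumes \<zeta>: "\<exists>L. L-lipschitz_on \<Omega> \<zeta>" and \<mu>: "prob_on \<Omega> \<mu>" "\<P>dual \<mu> = \<mu>"
    and centered: "(\<integral>x. \<zeta> x \<partial>\<mu>) = 0"
  shows "supnorm \<Omega> ((\<P> ^^ n) \<zeta>) + Lip \<Omega> ((\<P> ^^ n) \<zeta>) \<le> (1 + diameter \<Omega>) * C * Lip \<Omega> \<zeta> * lam ^ n"
proof -
  note \<zeta>_Lip = lipschitz_on_Lip[OF \<zeta>]
  have "\<Omega> \<noteq> {}" by (rule prob_on_imp_nonempty[OF \<mu>(1)])
  moreover have "\<bar>(\<P> ^^ n) \<zeta> x\<bar> \<le> C * lam ^ n * Lip \<Omega> \<zeta> * diameter \<Omega>" if "x \<in> \<Omega>" for x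
    by (rule Pnorm_iter_centered_bound[OF \<zeta>_Lip \<mu> centered that])
  ultimately have "supnorm \<Omega> ((\<P> ^^ n) \<zeta>) \<le> C * lam ^ n * Lip \<Omega> \<zeta> * diameter \<Omega>"
    unfolding supnorm_def by (intro cSup_least) blast+
  moreover have "Lip \<Omega> ((\<P> ^^ n) \<zeta>) \<le> C * lam ^ n * Lip \<Omega> \<zeta>"
    by (rule Lip_le[OF Pnorm_iter_lipschitz[OF \<zeta>_Lip]])
  ultimately show ?thesis by (simp add: algebra_simps)
qed

text \<open>A fixed point \<open>\<psi>\<close> of \<open>\<P>\<close> is constant: \<open>\<psi> - \<integral>\<psi> d\<mu>\<close> is fixed too, but its iterates decay
  geometrically.\<close>
lemma Pnorm_fixed_point_constant:
  assumes lam: "lam < 1" and \<psi>: "L-lipschitz_on \<Omega> \<psi>" and fixed: "\<And>x. x \<in> \<Omega> \<Longrightarrow> \<P> \<psi> x = \<psi> x"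
    and \<mu>: "prob_on \<Omega> \<mu>" "\<P>dual \<mu> = \<mu>" and x: "x \<in> \<Omega>"
  shows "\<psi> x = (\<integral>y. \<psi> y \<partial>\<mu>)"
proof -
  define c where "c = (\<integral>y. \<psi> y \<partial>\<mu>)"
  have \<zeta>: "L-lipschitz_on \<Omega> (\<lambda>y. \<psi> y - c)"
    using lipschitz_on_diff[OF \<psi> lipschitz_on_constant] by simp
  have "integrable \<mu> \<psi>"
    by (rule integrable_prob_on_continuous_on[OF compact_Omega \<mu>(1) lipschitz_on_continuous_on[OF \<psi>]])
  moreover have "prob_space \<mu>" using \<mu>(1) by (simp add: prob_on_def)
  ultimately have centered: "(\<integral>y. \<psi> y - c \<partial>\<mu>) = 0"
    by (simp add: c_def prob_space.prob_space prob_space_def finite_measure.integrable_const)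
  have "\<bar>\<psi> x - c\<bar> \<le> (C * L * diameter \<Omega>) * lam ^ n" for n
    using Pnorm_iter_centered_bound[OF \<zeta> \<mu> centered x, of n]
    by (simp add: Pnorm_iter_diff_const[OF x] Pnorm_iter_fixed[OF fixed x] mult_ac)
  moreover have "(\<lambda>n. (C * L * diameter \<Omega>) * lam ^ n) \<longlonglongrightarrow> 0"
    using lam lam_nonneg by (intro tendsto_mult_right_zero LIMSEQ_power_zero) auto
  ultimately have "\<bar>\<psi> x - c\<bar> \<le> 0" by (intro LIMSEQ_le_const[of "\<lambda>n. (C * L * diameter \<Omega>) * lam ^ n"]) auto
  then show ?thesis by (simp add: c_def)
qed

lemma eigenfunction_proportional:
  assumes lam: "lam < 1" and h: "\<exists>L. L-lipschitz_on \<Omega> h"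
    and \<mu>: "prob_on \<Omega> \<mu>" "\<P>dual \<mu> = \<mu>"
    and g: "\<exists>L. L-lipschitz_on \<Omega> g" "\<And>x. x \<in> \<Omega> \<Longrightarrow> transfer F A g x = \<rho> * g x"
  shows "\<exists>c. \<forall>x\<in>\<Omega>. g x = c * h x"
proof -
  obtain Lg Lh where "Lg-lipschitz_on \<Omega> g" "Lh-lipschitz_on \<Omega> h" using g(1) h by blast
  then obtain K where "K-lipschitz_on \<Omega> (\<lambda>x. g x / h x)"
    using lipschitz_on_divide_compact[OF compact_Omega] h_pos by blast
  then have "g x / h x = (\<integral>y. g y / h y \<partial>\<mu>)" if "x \<in> \<Omega>" for x
    using Pnorm_fixed_point_constant[OF lam _ Pnorm_divide_eigenfunction[OF g(2)] \<mu> that] by blast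
  then have "g x = (\<integral>y. g y / h y \<partial>\<mu>) * h x" if "x \<in> \<Omega>" for x
    using that h_pos[OF that] by (metis nonzero_eq_divide_eq order_less_irrefl)
  then show ?thesis by blast
qed

end

theorem mainTheorem3:
  fixes \<Omega> :: "'a::metric_space set"
    and F :: "'a \<Rightarrow> 'a multiset" and k :: nat and \<theta> :: real
    and A h :: "'a \<Rightarrow> real" and \<rho> C lam :: real and \<mu> :: "'a measure"
  assumes compact: "compact \<Omega>"
    and ics: "ICS \<Omega> k \<theta> F" and theta: "0 < \<theta>" "\<theta> < 1"
    and attr: "has_attractor \<Omega> F"
    and A_lip: "\<exists>L. L-lipschitz_on \<Omega> A"
    and rho: "\<rho> = spectral_radiusC \<Omega> (transfer F A)"
    and h_pos: "\<forall>x\<in>\<Omega>. 0 < h x"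
    and h_lip: "\<exists>L. L-lipschitz_on \<Omega> h"
    and h_eig: "\<forall>x\<in>\<Omega>. transfer F A h x = \<rho> * h x"
    and C: "0 < C" and lam: "0 < lam" "lam < 1"
    and contr: "\<forall>M N n. prob_on \<Omega> M \<and> prob_on \<Omega> N \<longrightarrow>
        W1 \<Omega> ((Pdual \<Omega> (Pnorm F A \<rho> h) ^^ n) M) ((Pdual \<Omega> (Pnorm F A \<rho> h) ^^ n) N)
          \<le> C * lam ^ n * W1 \<Omega> M N"
    and mu: "prob_on \<Omega> \<mu>" and mu_inv: "Pdual \<Omega> (Pnorm F A \<rho> h) \<mu> = \<mu>"
  shows "(\<forall>\<zeta> n. (\<exists>L. L-lipschitz_on \<Omega> \<zeta>) \<and> (\<integral>x. \<zeta> x \<partial>\<mu>) = 0 \<longrightarrow>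
            supnorm \<Omega> ((Pnorm F A \<rho> h ^^ n) \<zeta>) + Lip \<Omega> ((Pnorm F A \<rho> h ^^ n) \<zeta>)
              \<le> (1 + diameter \<Omega>) * C * Lip \<Omega> \<zeta> * lam ^ n)
       \<and> (\<forall>g. (\<forall>x\<in>\<Omega>. 0 < g x) \<and> (\<exists>L. L-lipschitz_on \<Omega> g) \<and>
              (\<forall>x\<in>\<Omega>. transfer F A g x = \<rho> * g x)
            \<longrightarrow> (\<exists>c. \<forall>x\<in>\<Omega>. g x = c * h x))"
proof -
  txt \<open>The contraction ratio \<open>\<theta>\<close>, the regularity of \<open>A\<close> and the identification of \<open>\<rho>\<close>
    with the spectral radius are only needed to produce \<open>h\<close>, \<open>C\<close> and \<open>lam\<close>; the argument uses
    the eigen-equation, the attractor property (for \<open>\<rho> > 0\<close>) and the contraction alone.\<close>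
  have F_into: "\<And>x. x \<in> \<Omega> \<Longrightarrow> set_mset (F x) \<subseteq> \<Omega>" using ics unfolding ICS_def by auto
  obtain x0 x1 where x1: "x1 \<in> \<Omega>" "x0 \<in># F x1"
    using prob_on_imp_nonempty[OF mu] attr unfolding has_attractor_def by blast
  then have "0 < transfer F A h x1"
    unfolding transfer_def using F_into[OF x1(1)] h_pos by (intro sum_mset_pos) auto
  then have "0 < \<rho>"
    using h_eig h_pos x1(1) by (auto simp: zero_less_mult_iff)
  then interpret W1_contracting_transfer \<Omega> F A h \<rho> C lam
    using compact F_into h_pos h_eig C lam(1) contr by unfold_locales auto
  show ?thesis
    using supnorm_add_Lip_Pnorm_iter_le[OF _ mu mu_inv] eigenfunction_proportional[OF lam(2) h_lip mu mu_inv]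
    by blast
qed

end
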